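(* Let $(X,G)$ be a minimal continuous action and $m\in\mathbb{N}$, $m\geq 2$. If $(X,G)$ is almost $m$-equicontinuous, then $(X,G)$ is $m$-equicontinuous.
   Context: $G$ is a locally compact topological group acting continuously on a compact metric space $(X,d)$; minimal means every orbit is dense. A point $x\in X$ is an $m$-equicontinuity point if for every $\varepsilon>0$ there is $\delta>0$ such that for any $x_1,\dots,x_m$ in the open ball $B_\delta(x)$ and every $g\in G$ there exist $i\neq j$ in $\{1,\dots,m\}$ with $d(gx_i,gx_j)<\varepsilon$; $E^m(X,G)$ is the set of such points. $(X,G)$ is $m$-equicontinuous if $E^m(X,G)=X$, and almost $m$-equicontinuous if $E^m(X,G)$ is residual in $X$. *)

theory Defs
  imports "HOL-Analysis.Analysis"
begin

text \<open>A topological group G is modelled as a type of class topological_group_add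
(group operation written additively, not necessarily commutative).\<close>

definition continuous_action :: "('g::topological_group_add \<Rightarrow> 'x::metric_space \<Rightarrow> 'x) \<Rightarrow> 'x set \<Rightarrow> bool" where
  "continuous_action act X \<longleftrightarrow>
     (\<forall>g x. x \<in> X \<longrightarrow> act g x \<in> X) \<and>
     (\<forall>x\<in>X. act 0 x = x) \<and>
     (\<forall>g h x. x \<in> X \<longrightarrow> act (g + h) x = act g (act h x)) \<and>
     continuous_on (UNIV \<times> X) (\<lambda>(g, x). act g x)"

definition minimal_action :: "('g \<Rightarrow> 'x::metric_space \<Rightarrow> 'x) \<Rightarrow> 'x set \<Rightarrow> bool" where
  "minimal_action act X \<longleftrightarrow> (\<forall>x\<in>X. X \<subseteq> closure (range (\<lambda>g. act g x)))"

text \<open>m-equicontinuity points (points x_1..x_m are indexed by 0..m-1).\<close>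
definition m_equicontinuity_points :: "nat \<Rightarrow> ('g \<Rightarrow> 'x::metric_space \<Rightarrow> 'x) \<Rightarrow> 'x set \<Rightarrow> 'x set" where
  "m_equicontinuity_points m act X =
     {x \<in> X. \<forall>\<epsilon>>0. \<exists>\<delta>>0. \<forall>xs :: nat \<Rightarrow> 'x.
        (\<forall>i<m. xs i \<in> X \<inter> ball x \<delta>) \<longrightarrow>
        (\<forall>g. \<exists>i<m. \<exists>j<m. i \<noteq> j \<and> dist (act g (xs i)) (act g (xs j)) < \<epsilon>)}"

definition residual_in :: "'x::metric_space set \<Rightarrow> 'x set \<Rightarrow> bool" where
  "residual_in E X \<longleftrightarrow>
     (\<exists>U :: nat \<Rightarrow> 'x set. (\<forall>n. openin (top_of_set X) (U n) \<and> X \<subseteq> closure (U n))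
         \<and> (\<Inter>n. U n) \<subseteq> E)"

definition m_equicontinuous :: "nat \<Rightarrow> ('g \<Rightarrow> 'x::metric_space \<Rightarrow> 'x) \<Rightarrow> 'x set \<Rightarrow> bool" where
  "m_equicontinuous m act X \<longleftrightarrow> m_equicontinuity_points m act X = X"

definition almost_m_equicontinuous :: "nat \<Rightarrow> ('g \<Rightarrow> 'x::metric_space \<Rightarrow> 'x) \<Rightarrow> 'x set \<Rightarrow> bool" where
  "almost_m_equicontinuous m act X \<longleftrightarrow> residual_in (m_equicontinuity_points m act X) X"

end

theory Submission
  imports Defs
begin

text \<open>A single m-equicontinuity point suffices: if y is one, then so is every x whose orbit
closure contains y, because some translate h x lies near y, the continuous map h sends a small
ball around x into the \<delta>-ball of y, and g = (g - h) + h transfers the m-point condition at y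
back to x. Minimality makes every orbit closure all of X, and by the Baire category theorem a
residual subset of the nonempty compact space X is nonempty.\<close>

lemma residual_in_nonempty:
  fixes X :: "'x::metric_space set"
  assumes "compact X" "X \<noteq> {}" "residual_in E X"
  shows "E \<noteq> {}"
proof -
  obtain U :: "nat \<Rightarrow> 'x set"
    where U: "\<And>n. openin (top_of_set X) (U n) \<and> X \<subseteq> closure (U n)"
      and sub: "(\<Inter>n. U n) \<subseteq> E"
    using assms(3) unfolding residual_in_def by blast
  have X_Baire: "locally_compact_space (top_of_set X) \<and> regular_space (top_of_set X)"
    using assms(1) by (simp add: Hausdorff_space_subtopology compact_Hausdorff_imp_regular_space
        compact_imp_locally_compact_space compact_space_subtopology)
  have dense: "(top_of_set X) closure_of U n = topspace (top_of_set X)" for n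
  proof -
    have "U n \<subseteq> X" using U[of n] openin_imp_subset by blast
    then show ?thesis using U[of n] by (simp add: closure_of_subtopology_open inf.order_iff)
  qed
  have "(top_of_set X) closure_of \<Inter>(range U) = topspace (top_of_set X)"
    by (rule Baire_category) (use X_Baire dense U in auto)
  then show ?thesis using assms(2) sub by auto
qed

lemma continuous_action_continuous_on:
  assumes "continuous_action act X"
  shows "continuous_on X (act h)"
proof -
  have "continuous_on (UNIV \<times> X) (\<lambda>(g, x). act g x)"
    using assms unfolding continuous_action_def by blast
  moreover have "continuous_on X (\<lambda>x. (h, x))" by (intro continuous_intros)
  moreover have "(\<lambda>x. (h, x)) ` X \<subseteq> UNIV \<times> X" by auto
  ultimately have "continuous_on X ((\<lambda>(g, x). act g x) \<circ> (\<lambda>x. (h, x)))"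
    using continuous_on_compose continuous_on_subset by blast
  then show ?thesis by (simp add: o_def)
qed

lemma continuous_action_diff_cancel:
  assumes "continuous_action act X" "x \<in> X"
  shows "act (g - h) (act h x) = act g x"
  using assms unfolding continuous_action_def by (metis diff_add_cancel)

lemma m_equicontinuity_point_if_in_orbit_closure:
  assumes act: "continuous_action act X"
    and y: "y \<in> m_equicontinuity_points m act X"
    and x: "x \<in> X" "y \<in> closure (range (\<lambda>g. act g x))"
  shows "x \<in> m_equicontinuity_points m act X"
  unfolding m_equicontinuity_points_def
proof (intro CollectI conjI x allI impI)
  fix \<epsilon> :: real assume "\<epsilon> > 0"
  then obtain \<delta> where "\<delta> > 0" and y_cond: "\<And>xs. \<forall>i<m. xs i \<in> X \<inter> ball y \<delta> \<Longrightarrow>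
      \<forall>g. \<exists>i<m. \<exists>j<m. i \<noteq> j \<and> dist (act g (xs i)) (act g (xs j)) < \<epsilon>"
    using y unfolding m_equicontinuity_points_def by blast
  obtain h where h: "dist (act h x) y < \<delta>/2"
    using x(2) \<open>\<delta> > 0\<close> unfolding closure_approachable by (metis half_gt_zero rangeE)
  obtain \<delta>' where "\<delta>' > 0" and near: "\<And>x'. x' \<in> X \<Longrightarrow> dist x' x < \<delta>' \<Longrightarrow>
      dist (act h x') (act h x) < \<delta>/2"
    using continuous_action_continuous_on[OF act, of h] x(1) \<open>\<delta> > 0\<close>
    unfolding continuous_on_iff by (metis half_gt_zero)
  show "\<exists>\<delta>>0. \<forall>xs. (\<forall>i<m. xs i \<in> X \<inter> ball x \<delta>) \<longrightarrow>
      (\<forall>g. \<exists>i<m. \<exists>j<m. i \<noteq> j \<and> dist (act g (xs i)) (act g (xs j)) < \<epsilon>)"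
  proof (intro exI[of _ \<delta>'] conjI \<open>\<delta>' > 0\<close> allI impI)
    fix xs g assume xs: "\<forall>i<m. xs i \<in> X \<inter> ball x \<delta>'"
    have "\<forall>i<m. act h (xs i) \<in> X \<inter> ball y \<delta>"
    proof (intro allI impI)
      fix i assume "i < m"
      then have "xs i \<in> X" "dist (xs i) x < \<delta>'" using xs by (auto simp: dist_commute)
      then have "dist (act h (xs i)) (act h x) < \<delta>/2" using near by blast
      with h have "dist y (act h (xs i)) < \<delta>"
        by (metis dist_commute dist_triangle_half_r)
      then show "act h (xs i) \<in> X \<inter> ball y \<delta>"
        using act \<open>xs i \<in> X\<close> unfolding continuous_action_def by auto
    qed
    then obtain i j where "i < m" "j < m" "i \<noteq> j"
      "dist (act (g - h) (act h (xs i))) (act (g - h) (act h (xs j))) < \<epsilon>"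
      using y_cond[of "\<lambda>i. act h (xs i)"] by blast
    then show "\<exists>i<m. \<exists>j<m. i \<noteq> j \<and> dist (act g (xs i)) (act g (xs j)) < \<epsilon>"
      using continuous_action_diff_cancel[OF act] xs by (metis IntD1)
  qed
qed

lemma minimal_m_equicontinuous_if_point:
  assumes "continuous_action act X" "minimal_action act X"
    and "y \<in> m_equicontinuity_points m act X"
  shows "m_equicontinuous m act X"
proof -
  have "y \<in> X" using assms(3) unfolding m_equicontinuity_points_def by blast
  then have "X \<subseteq> m_equicontinuity_points m act X"
    using assms m_equicontinuity_point_if_in_orbit_closure unfolding minimal_action_def by blast
  then show ?thesis
    unfolding m_equicontinuous_def m_equicontinuity_points_def by blast
qed

theorem proposition4p5:
  fixes act :: "'g::topological_group_add \<Rightarrow> 'x::metric_space \<Rightarrow> 'x"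
    and X :: "'x set" and m :: nat
  assumes "locally_compact_space (euclidean :: 'g topology)"
    and "compact X"
    and "continuous_action act X"
    and "minimal_action act X"
    and "m \<ge> 2"
    and "almost_m_equicontinuous m act X"
  shows "m_equicontinuous m act X"
proof (cases "X = {}")
  case True
  then show ?thesis unfolding m_equicontinuous_def m_equicontinuity_points_def by auto
next
  case False
  then obtain y where "y \<in> m_equicontinuity_points m act X"
    using residual_in_nonempty[OF assms(2)] assms(6) unfolding almost_m_equicontinuous_def by blast
  then show ?thesis using minimal_m_equicontinuous_if_point assms(3,4) by blast
qed

end
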